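(* There exist a transition matrix $P$, reward distributions, and probabilities $q^0_j$ of the causal variables $X^0_j$ ($j\in[n]$) at the start state such that, for any probabilities $q^i_j$ of the causal variables at the intermediate states $i\in[k]$, the simple regret achieved by any algorithm with budget $T$ satisfies $$\mathrm{Regret}_T\in\Omega\left(\sqrt{\frac{\lambda}{T}}\right).$$
   Context: Two-stage causal MDP. There is a start state $0$, intermediate states $[k]=\{1,\dots,k\}$ and a terminal state. At each state $i\in\{0,1,\dots,k\}$ there are $n$ mutually independent Bernoulli variables $X^i_1,\dots,X^i_n$ with $q^i_j=\mathbb{P}\{X^i_j=1\}$. The atomic interventions at state $i$ are $\mathcal{I}_i=\{do()\}\cup\{do(X^i_j=0),do(X^i_j=1): j\in[n]\}$, $N=2n+1$; $do()$ lets all variables take their natural values and $do(X^i_j=x)$ sets $X^i_j=x$ while other variables are drawn independently. Performing $a\in\mathcal{I}_0$ at state $0$ leads to state $i\in[k]$ with probability $P_{(a,i)}$ (depending stochastically on the realized $X^0$-values), $P\in\mathbb{R}^{N\times k}$. At state $i\in[k]$, after an intervention the learner observes all $X^i_j$ and a reward $R_i\in\{0,1\}$ whose law depends on the $X^i$-values; $\mathbb{E}[R_i\mid a]$ is the expected reward under $a\in\mathcal{I}_i$. A policy $\pi$ chooses $\pi(0)\in\mathcal{I}_0$, $\pi(i)\in\mathcal{I}_i$; its value is $V(\pi)=\sum_{i}P_{(\pi(0),i)}\mathbb{E}[R_i\mid\pi(i)]$, $\pi^*$ maximizes $V$, $\varepsilon(\pi)=V(\pi^* )-V(\pi)$. An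 algorithm with budget $T$ runs $T$ rounds (each: an intervention at state $0$, observe the $X^0$-values and the reached state $i$, an intervention at $i$, observe the $X^i$-values and $R_i$), all parameters being unknown to it, and outputs $\widehat\pi$; $\mathrm{Regret}_T=\mathbb{E}[\varepsilon(\widehat\pi)]$. Causal parameters: for state $i$, sort $q^i_{(1)}\le\dots\le q^i_{(n)}$ (taking, for each variable, the smaller of $\mathbb{P}\{X^i_j=1\}$ and $\mathbb{P}\{X^i_j=0\}$) and let $m_i=\max\{j:q^i_{(j)}<1/j\}$; $M=\mathrm{diag}(m_1,\dots,m_k)$. A frequency vector is $f\in\mathbb{R}^N$ with $f\ge0$, $\sum_a f_a=1$; $x^{\circ-1/2}$ denotes the entrywise map $x_i\mapsto x_i^{-1/2}$. The instance parameter is $\lambda=\min_f\|PM^{1/2}(P^\top f)^{\circ-1/2}\|_\infty^2$ over frequency vectors $f$. *)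

theory Defs
  imports "HOL-Probability.Probability"
begin

text \<open>Atomic interventions: Obs is do(), and Do j x is do(X_j = x).
  Variables are indexed by j in {1..n}; states by 0 (start) and i in {1..k}.\<close>
datatype interv = Obs | Do nat bool

definition interventions :: "nat \<Rightarrow> interv set" where
  "interventions n = {Obs} \<union> {Do j b | j b. j \<in> {1..n}}"

text \<open>Distribution of the vector (X_1,...,X_n) (coordinates outside {1..n} are False)
  at a state with probabilities q j = P(X_j = 1), under intervention a.\<close>
definition Xdist :: "nat \<Rightarrow> (nat \<Rightarrow> real) \<Rightarrow> interv \<Rightarrow> (nat \<Rightarrow> bool) pmf" where
  "Xdist n q a = Pi_pmf {1..n} False
     (\<lambda>j. case a of Obs \<Rightarrow> bernoulli_pmf (q j)
                  | Do j' b \<Rightarrow> (if j = j' then return_pmf b else bernoulli_pmf (q j)))"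

text \<open>Transition matrix: tr x is the law of the next state given the realised X^0 = x;
  P_(a,i) is the probability of reaching state i when performing a at state 0.\<close>
definition Pmat :: "nat \<Rightarrow> (nat \<Rightarrow> real) \<Rightarrow> ((nat \<Rightarrow> bool) \<Rightarrow> nat pmf) \<Rightarrow> interv \<Rightarrow> nat \<Rightarrow> real" where
  "Pmat n q0 tr a i = pmf (bind_pmf (Xdist n q0 a) tr) i"

text \<open>Reward R_i is {0,1}-valued with P(R_i = 1 | X^i = x) = rw i x.
  Expected reward E[R_i | a].\<close>
definition exp_reward :: "nat \<Rightarrow> (nat \<Rightarrow> nat \<Rightarrow> real) \<Rightarrow> (nat \<Rightarrow> (nat \<Rightarrow> bool) \<Rightarrow> real) \<Rightarrow> nat \<Rightarrow> interv \<Rightarrow> real" where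
  "exp_reward n qs rw i a = measure_pmf.expectation (Xdist n (qs i) a) (rw i)"

definition policies :: "nat \<Rightarrow> nat \<Rightarrow> (nat \<Rightarrow> interv) set" where
  "policies n k = {\<pi>. \<forall>i\<le>k. \<pi> i \<in> interventions n}"

definition pvalue :: "nat \<Rightarrow> nat \<Rightarrow> (nat \<Rightarrow> real) \<Rightarrow> ((nat \<Rightarrow> bool) \<Rightarrow> nat pmf)
    \<Rightarrow> (nat \<Rightarrow> nat \<Rightarrow> real) \<Rightarrow> (nat \<Rightarrow> (nat \<Rightarrow> bool) \<Rightarrow> real) \<Rightarrow> (nat \<Rightarrow> interv) \<Rightarrow> real" where
  "pvalue n k q0 tr qs rw \<pi> = (\<Sum>i\<in>{1..k}. Pmat n q0 tr (\<pi> 0) i * exp_reward n qs rw i (\<pi> i))"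

definition opt_value :: "nat \<Rightarrow> nat \<Rightarrow> (nat \<Rightarrow> real) \<Rightarrow> ((nat \<Rightarrow> bool) \<Rightarrow> nat pmf)
    \<Rightarrow> (nat \<Rightarrow> nat \<Rightarrow> real) \<Rightarrow> (nat \<Rightarrow> (nat \<Rightarrow> bool) \<Rightarrow> real) \<Rightarrow> real" where
  "opt_value n k q0 tr qs rw = (SUP \<pi>\<in>policies n k. pvalue n k q0 tr qs rw \<pi>)"

definition subopt :: "nat \<Rightarrow> nat \<Rightarrow> (nat \<Rightarrow> real) \<Rightarrow> ((nat \<Rightarrow> bool) \<Rightarrow> nat pmf)
    \<Rightarrow> (nat \<Rightarrow> nat \<Rightarrow> real) \<Rightarrow> (nat \<Rightarrow> (nat \<Rightarrow> bool) \<Rightarrow> real) \<Rightarrow> (nat \<Rightarrow> interv) \<Rightarrow> real" where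
  "subopt n k q0 tr qs rw \<pi> = opt_value n k q0 tr qs rw - pvalue n k q0 tr qs rw \<pi>"

text \<open>One round's observation: (intervention at 0, X^0-values, reached state i,
  intervention at i, X^i-values, reward R_i (True = 1)).\<close>
type_synonym obs = "interv \<times> (nat \<Rightarrow> bool) \<times> nat \<times> interv \<times> (nat \<Rightarrow> bool) \<times> bool"

text \<open>A (possibly randomised, adaptive) algorithm: the choice at state 0 given the history,
  the choice at the reached state given the history and the current round's observations,
  and the output policy given the full history.\<close>
record algo =
  alg_first :: "obs list \<Rightarrow> interv pmf"
  alg_second :: "obs list \<Rightarrow> interv \<Rightarrow> (nat \<Rightarrow> bool) \<Rightarrow> nat \<Rightarrow> interv pmf"
  alg_out :: "obs list \<Rightarrow> (nat \<Rightarrow> interv) pmf"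

definition valid_algo :: "nat \<Rightarrow> nat \<Rightarrow> algo \<Rightarrow> bool" where
  "valid_algo n k A \<longleftrightarrow>
     (\<forall>h. set_pmf (alg_first A h) \<subseteq> interventions n) \<and>
     (\<forall>h a x i. set_pmf (alg_second A h a x i) \<subseteq> interventions n) \<and>
     (\<forall>h. set_pmf (alg_out A h) \<subseteq> policies n k)"

definition round_pmf :: "nat \<Rightarrow> (nat \<Rightarrow> real) \<Rightarrow> ((nat \<Rightarrow> bool) \<Rightarrow> nat pmf)
    \<Rightarrow> (nat \<Rightarrow> nat \<Rightarrow> real) \<Rightarrow> (nat \<Rightarrow> (nat \<Rightarrow> bool) \<Rightarrow> real) \<Rightarrow> algo \<Rightarrow> obs list \<Rightarrow> obs pmf" where
  "round_pmf n q0 tr qs rw A h =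
     bind_pmf (alg_first A h) (\<lambda>a0.
     bind_pmf (Xdist n q0 a0) (\<lambda>x0.
     bind_pmf (tr x0) (\<lambda>i.
     bind_pmf (alg_second A h a0 x0 i) (\<lambda>a1.
     bind_pmf (Xdist n (qs i) a1) (\<lambda>x1.
     bind_pmf (bernoulli_pmf (rw i x1)) (\<lambda>r.
     return_pmf (a0, x0, i, a1, x1, r)))))))"

fun history :: "nat \<Rightarrow> (nat \<Rightarrow> real) \<Rightarrow> ((nat \<Rightarrow> bool) \<Rightarrow> nat pmf)
    \<Rightarrow> (nat \<Rightarrow> nat \<Rightarrow> real) \<Rightarrow> (nat \<Rightarrow> (nat \<Rightarrow> bool) \<Rightarrow> real) \<Rightarrow> algo \<Rightarrow> nat \<Rightarrow> obs list pmf" where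
  "history n q0 tr qs rw A 0 = return_pmf []"
| "history n q0 tr qs rw A (Suc t) =
     bind_pmf (history n q0 tr qs rw A t)
       (\<lambda>h. map_pmf (\<lambda>ob. h @ [ob]) (round_pmf n q0 tr qs rw A h))"

definition simple_regret :: "nat \<Rightarrow> nat \<Rightarrow> (nat \<Rightarrow> real) \<Rightarrow> ((nat \<Rightarrow> bool) \<Rightarrow> nat pmf)
    \<Rightarrow> (nat \<Rightarrow> nat \<Rightarrow> real) \<Rightarrow> (nat \<Rightarrow> (nat \<Rightarrow> bool) \<Rightarrow> real) \<Rightarrow> algo \<Rightarrow> nat \<Rightarrow> real" where
  "simple_regret n k q0 tr qs rw A T =
     measure_pmf.expectation (bind_pmf (history n q0 tr qs rw A T) (alg_out A))
       (subopt n k q0 tr qs rw)"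

definition mpar :: "nat \<Rightarrow> (nat \<Rightarrow> real) \<Rightarrow> nat" where
  "mpar n q = (let s = sort (map (\<lambda>j. min (q j) (1 - q j)) [1..<n+1])
               in Max {j \<in> {1..n}. s ! (j - 1) < 1 / real j})"

definition freqs :: "nat \<Rightarrow> (interv \<Rightarrow> real) set" where
  "freqs n = {f. (\<forall>a\<in>interventions n. f a > 0) \<and> (\<Sum>a\<in>interventions n. f a) = 1}"

text \<open>lambda = min_f || P M^(1/2) (P^T f)^(o -1/2) ||_inf ^2.\<close>
definition lambda_par :: "nat \<Rightarrow> nat \<Rightarrow> (nat \<Rightarrow> real) \<Rightarrow> ((nat \<Rightarrow> bool) \<Rightarrow> nat pmf)
    \<Rightarrow> (nat \<Rightarrow> nat \<Rightarrow> real) \<Rightarrow> real" where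
  "lambda_par n k q0 tr qs =
     (INF f\<in>freqs n.
        (Max ((\<lambda>a. \<bar>\<Sum>i\<in>{1..k}. Pmat n q0 tr a i * sqrt (real (mpar n (qs i)))
                     * (\<Sum>b\<in>interventions n. Pmat n q0 tr b i * f b) powr (-1/2)\<bar>)
              ` interventions n)) ^ 2)"

end

theory Submission
  imports Defs
begin

text \<open>
  Let the start state lead deterministically to state 1.  Then only the causal bandit at
  state 1 matters, and uniform frequencies show \<open>\<lambda> \<le> m\<close> with \<open>m = m\<^sub>1\<close>.  Pick a set
  \<open>S\<close> of about \<open>m/2\<close> variables whose rare values have total probability at most \<open>1/2\<close>.
  Under the base reward, forcing some \<open>X\<^sub>j\<close>, \<open>j \<in> S\<close>, to its rare value costs at least
  \<open>\<delta>/2\<close> against \<open>do()\<close>; under the \<open>j\<close>-th alternative, every other choice at state 1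
  costs at least \<open>\<delta>/2\<close>.  The base instance and the \<open>j\<close>-th alternative differ only in
  rounds where \<open>X\<^sub>j\<close> is rare, and a single intervention makes at most \<open>3/2\<close> of these
  events happen in expectation, so the Kullback-Leibler divergences of the history laws
  sum to \<open>O(\<delta>\<^sup>2 T)\<close>.  A Bretagnolle-Huber type inequality then bounds the summed regret
  of the \<open>|S| + 1\<close> instances from below by \<open>\<delta> |S| / 8\<close> when \<open>\<delta> = \<surd>(|S| / 48 T)\<close>,
  so one of them has regret at least \<open>\<delta>/16 \<ge> \<surd>(\<lambda>/T) / 192\<close>.
\<close>

section \<open>Expectations and a testing inequality\<close>

lemma expectation_bind_pmf_bounded:
  fixes f :: "'b \<Rightarrow> real"
  assumes "\<And>x. \<bar>f x\<bar> \<le> B"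
  shows "measure_pmf.expectation (bind_pmf M N) f
       = measure_pmf.expectation M (\<lambda>x. measure_pmf.expectation (N x) f)"
  using measurable_measure_pmf[of N] assms unfolding measure_pmf_bind
  by (intro integral_bind[where K="count_space UNIV" and B=B and B'=1])
     (auto intro!: measure_pmf.finite_measure AE_I2 simp: measure_pmf.emeasure_space_1)

lemma expectation_bind_pmf_finite:
  fixes f :: "'b \<Rightarrow> real"
  assumes "finite (set_pmf M)" "\<And>x. x \<in> set_pmf M \<Longrightarrow> finite (set_pmf (N x))"
  shows "measure_pmf.expectation (bind_pmf M N) f
       = measure_pmf.expectation M (\<lambda>x. measure_pmf.expectation (N x) f)"
  using assms by (simp add: pmf_expectation_bind[of "set_pmf M"] integral_measure_pmf[of "set_pmf M"])

lemma expectation_le_const_finite: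
  fixes f :: "'a \<Rightarrow> real"
  assumes "finite (set_pmf M)" "\<And>x. x \<in> set_pmf M \<Longrightarrow> f x \<le> c"
  shows "measure_pmf.expectation M f \<le> c"
  using assms by (intro measure_pmf.integral_le_const integrable_measure_pmf_finite)
     (auto simp: AE_measure_pmf_iff)

lemma expectation_unit_interval:
  fixes f :: "'a \<Rightarrow> real"
  assumes "\<And>x. 0 \<le> f x \<and> f x \<le> 1"
  shows "0 \<le> measure_pmf.expectation M f \<and> measure_pmf.expectation M f \<le> 1"
  using assms
  by (auto intro!: Bochner_Integration.integral_nonneg measure_pmf.integral_le_const
      measure_pmf.integrable_const_bound[where B=1])

lemma square_one_plus_half_le_exp:
  fixes l :: real
  assumes "-2 \<le> l"
  shows "(1 + l/2)^2 \<le> exp l"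
proof -
  have "(1 + l/2)^2 \<le> exp (l/2)^2"
    using assms by (intro power_mono) (auto simp: add.commute)
  then show ?thesis by (simp add: power2_eq_square exp_add[symmetric])
qed

text \<open>An affine minorant of \<open>min 1 y\<close> in \<open>ln y\<close> and \<open>y\<close>; when \<open>y = exp l\<close> has mean one,
  it integrates to \<open>(1 + \<integral>l)/2\<close>.\<close>
lemma min_one_exp_ge:
  fixes l :: real
  shows "1/2 + l/2 - (exp l - 1)/4 \<le> min 1 (exp l)"
proof (cases "0 \<le> l")
  case True
  have "(1 + l/2)^2 - (2*l - 1) = (l/2 - 1)^2 + 1"
    by (simp add: power2_eq_square field_simps)
  then have "2*l - 1 \<le> (1 + l/2)^2"
    using zero_le_power2[of "l/2 - 1"] by linarith
  then have "2*l - 1 \<le> exp l"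
    using square_one_plus_half_le_exp[of l] True by linarith
  then have "1/2 + l/2 - (exp l - 1)/4 \<le> 1" by (simp add: field_simps)
  then show ?thesis using True by simp
next
  case False
  have "3 + 2*l \<le> 5 * exp l"
  proof (cases "-2 \<le> l")
    case True
    have "5 * (1 + l/2)^2 - (3 + 2*l) = 5/4 * (l + 6/5)^2 + 1/5"
      by (simp add: power2_eq_square field_simps)
    then have "3 + 2*l \<le> 5 * (1 + l/2)^2"
      using zero_le_power2[of "l + 6/5"] by linarith
    then show ?thesis
      using square_one_plus_half_le_exp[OF True] by linarith
  qed (use exp_gt_zero[of l] in linarith)
  then show ?thesis using False by (simp add: field_simps)
qed

text \<open>A Bretagnolle-Huber type inequality: if \<open>exp l\<close> is the density of a second law
  with respect to \<open>M\<close>, the error probabilities of a randomised test \<open>g\<close> under the two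
  laws add up to at least \<open>(1 - KL)/2\<close>, where \<open>KL = -(\<integral>l dM)\<close>.\<close>
lemma testing_errors_ge:
  fixes g l :: "'a \<Rightarrow> real"
  assumes "finite (set_pmf M)" and "\<And>x. 0 \<le> g x \<and> g x \<le> 1"
    and "measure_pmf.expectation M (\<lambda>x. exp (l x)) = 1"
  shows "(1 + measure_pmf.expectation M l) / 2
       \<le> measure_pmf.expectation M g + measure_pmf.expectation M (\<lambda>x. (1 - g x) * exp (l x))"
proof -
  note integrable = integrable_measure_pmf_finite[OF assms(1)]
  have "1/2 + l x/2 - (exp (l x) - 1)/4 \<le> g x + (1 - g x) * exp (l x)" for x
  proof -
    have "g x * (1 - exp (l x)) \<ge> 0" if "exp (l x) \<le> 1"
      using assms(2)[of x] that by simp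
    moreover have "(1 - g x) * (exp (l x) - 1) \<ge> 0" if "\<not> exp (l x) \<le> 1"
      using assms(2)[of x] that by simp
    ultimately have "min 1 (exp (l x)) \<le> g x + (1 - g x) * exp (l x)"
      by (cases "exp (l x) \<le> 1") (auto simp: min_def algebra_simps)
    then show ?thesis using min_one_exp_ge[of "l x"] by linarith
  qed
  then have "measure_pmf.expectation M (\<lambda>x. 1/2 + l x/2 - (exp (l x) - 1)/4)
      \<le> measure_pmf.expectation M (\<lambda>x. g x + (1 - g x) * exp (l x))"
    by (intro integral_mono integrable)
  then show ?thesis
    using assms(3) by (simp add: integrable Bochner_Integration.integral_add
        Bochner_Integration.integral_diff)
qed

lemma exists_ge_of_sum_ge:
  fixes a c :: real
  assumes "finite S" and "(real (card S) + 1) * c \<le> a + (\<Sum>j\<in>S. b j)"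
  shows "c \<le> a \<or> (\<exists>j\<in>S. c \<le> b j)"
proof (rule ccontr)
  assume "\<not> ?thesis"
  then have "a < c" and "\<And>j. j \<in> S \<Longrightarrow> b j \<le> c" by auto
  then have "a < c" and "(\<Sum>j\<in>S. b j) \<le> real (card S) * c"
    by (auto intro: sum_bounded_above)
  with assms(2) show False by (simp add: algebra_simps)
qed

section \<open>Policy values and simple regret\<close>

lemma finite_interventions [simp]: "finite (interventions n)"
proof -
  have "interventions n \<subseteq> insert Obs ((\<lambda>(j, b). Do j b) ` ({1..n} \<times> UNIV))"
    unfolding interventions_def by auto
  then show ?thesis by (rule finite_subset) auto
qed

lemma Obs_in_interventions [simp]: "Obs \<in> interventions n"
  by (simp add: interventions_def)

lemma const_in_policies: "a \<in> interventions n \<Longrightarrow> (\<lambda>_. a) \<in> policies n k"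
  by (simp add: policies_def)

lemma finite_set_Xdist [simp]: "finite (set_pmf (Xdist n q a))"
  unfolding Xdist_def
  by (rule finite_subset[OF set_Pi_pmf_subset']) (auto intro!: finite_PiE_dflt)

lemma finite_set_bernoulli_pmf [simp]: "finite (set_pmf (bernoulli_pmf p))"
  by (rule finite_subset[of _ UNIV]) auto

lemma sum_Pmat_le_1: "(\<Sum>i\<in>{1..k}. Pmat n q0 tr a i) \<le> 1"
  unfolding Pmat_def by (simp flip: measure_measure_pmf_finite)

lemma exp_reward_bounds:
  assumes "\<And>i x. 0 \<le> rw i x \<and> rw i x \<le> 1"
  shows "0 \<le> exp_reward n qs rw i a \<and> exp_reward n qs rw i a \<le> 1"
  unfolding exp_reward_def using assms by (rule expectation_unit_interval)

context
  fixes n k :: nat and q0 :: "nat \<Rightarrow> real" and tr :: "(nat \<Rightarrow> bool) \<Rightarrow> nat pmf"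
    and qs :: "nat \<Rightarrow> nat \<Rightarrow> real" and rw :: "nat \<Rightarrow> (nat \<Rightarrow> bool) \<Rightarrow> real"
  assumes reward_bounds: "\<And>i x. 0 \<le> rw i x \<and> rw i x \<le> 1"
begin

lemma pvalue_bounds: "0 \<le> pvalue n k q0 tr qs rw \<pi> \<and> pvalue n k q0 tr qs rw \<pi> \<le> 1"
proof
  have "pvalue n k q0 tr qs rw \<pi> \<le> (\<Sum>i\<in>{1..k}. Pmat n q0 tr (\<pi> 0) i)"
    unfolding pvalue_def using exp_reward_bounds[OF reward_bounds]
    by (intro sum_mono mult_right_le_one_le) (auto simp: Pmat_def)
  then show "pvalue n k q0 tr qs rw \<pi> \<le> 1" using sum_Pmat_le_1 by (rule order_trans)
  show "0 \<le> pvalue n k q0 tr qs rw \<pi>"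
    unfolding pvalue_def using exp_reward_bounds[OF reward_bounds]
    by (intro sum_nonneg mult_nonneg_nonneg) (auto simp: Pmat_def)
qed

lemma pvalue_le_opt_value: "\<pi> \<in> policies n k \<Longrightarrow> pvalue n k q0 tr qs rw \<pi> \<le> opt_value n k q0 tr qs rw"
  unfolding opt_value_def using pvalue_bounds by (intro cSUP_upper) (auto intro!: bdd_aboveI[of _ 1])

lemma opt_value_le_1: "opt_value n k q0 tr qs rw \<le> 1"
  unfolding opt_value_def using pvalue_bounds const_in_policies[OF Obs_in_interventions]
  by (intro cSUP_least) auto

lemma subopt_ge_diff:
  "\<pi>' \<in> policies n k \<Longrightarrow> pvalue n k q0 tr qs rw \<pi>' - pvalue n k q0 tr qs rw \<pi> \<le> subopt n k q0 tr qs rw \<pi>"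
  unfolding subopt_def using pvalue_le_opt_value by simp

lemma subopt_nonneg: "\<pi> \<in> policies n k \<Longrightarrow> 0 \<le> subopt n k q0 tr qs rw \<pi>"
  using subopt_ge_diff[of \<pi> \<pi>] by simp

lemma abs_subopt_le_1: "\<bar>subopt n k q0 tr qs rw \<pi>\<bar> \<le> 1"
  using pvalue_bounds[of \<pi>] opt_value_le_1
    pvalue_le_opt_value[OF const_in_policies[OF Obs_in_interventions]] pvalue_bounds[of "\<lambda>_. Obs"]
  unfolding subopt_def by linarith

lemma simple_regret_ge:
  assumes "valid_algo n k A"
    and "\<And>\<pi>. \<pi> \<in> policies n k \<Longrightarrow> \<phi> \<pi> \<le> subopt n k q0 tr qs rw \<pi>" and "\<And>\<pi>. \<bar>\<phi> \<pi>\<bar> \<le> 1"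
  shows "measure_pmf.expectation (history n q0 tr qs rw A T)
           (\<lambda>h. measure_pmf.expectation (alg_out A h) \<phi>) \<le> simple_regret n k q0 tr qs rw A T"
proof -
  have "set_pmf (bind_pmf (history n q0 tr qs rw A T) (alg_out A)) \<subseteq> policies n k"
    using assms(1) by (auto simp: valid_algo_def)
  then have "measure_pmf.expectation (bind_pmf (history n q0 tr qs rw A T) (alg_out A)) \<phi>
      \<le> simple_regret n k q0 tr qs rw A T"
    unfolding simple_regret_def using assms(2,3) abs_subopt_le_1
    by (intro integral_mono_AE measure_pmf.integrable_const_bound[where B=1])
       (auto simp: AE_measure_pmf_iff)
  then show ?thesis by (simp only: expectation_bind_pmf_bounded[OF assms(3)])
qed

end

section \<open>Histories and change of measure\<close>

definition llr_sum :: "(nat \<Rightarrow> (nat \<Rightarrow> bool) \<Rightarrow> bool \<Rightarrow> real) \<Rightarrow> obs list \<Rightarrow> real" where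
  "llr_sum F h = sum_list (map (\<lambda>(a0, x0, i, a1, x1, r). F i x1 r) h)"

lemma llr_sum_sum: "llr_sum (\<lambda>i x r. \<Sum>j\<in>J. F j i x r) h = (\<Sum>j\<in>J. llr_sum (F j) h)"
  by (induction h) (auto simp: llr_sum_def sum.distrib)

lemma llr_sum_uminus: "llr_sum (\<lambda>i x r. - F i x r) h = - llr_sum F h"
  by (induction h) (auto simp: llr_sum_def)

context
  fixes n k :: nat and q0 :: "nat \<Rightarrow> real" and tr :: "(nat \<Rightarrow> bool) \<Rightarrow> nat pmf"
    and qs :: "nat \<Rightarrow> nat \<Rightarrow> real" and A :: algo
  assumes finite_tr: "\<And>x. finite (set_pmf (tr x))" and valid: "valid_algo n k A"
begin

lemma finite_set_alg_first [simp]: "finite (set_pmf (alg_first A h))"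
  using valid unfolding valid_algo_def by (meson finite_interventions finite_subset)

lemma finite_set_alg_second [simp]: "finite (set_pmf (alg_second A h a x i))"
  using valid unfolding valid_algo_def by (meson finite_interventions finite_subset)

lemma finite_set_round_pmf [simp]: "finite (set_pmf (round_pmf n q0 tr qs rw A h))"
  unfolding round_pmf_def by (simp add: finite_tr)

lemma finite_set_history [simp]: "finite (set_pmf (history n q0 tr qs rw A T))"
  by (induction T) auto

lemma expectation_round_pmf:
  fixes \<Phi> :: "obs \<Rightarrow> real"
  shows "measure_pmf.expectation (round_pmf n q0 tr qs rw A h) \<Phi> =
   measure_pmf.expectation (alg_first A h) (\<lambda>a0.
   measure_pmf.expectation (Xdist n q0 a0) (\<lambda>x0.
   measure_pmf.expectation (tr x0) (\<lambda>i.
   measure_pmf.expectation (alg_second A h a0 x0 i) (\<lambda>a1.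
   measure_pmf.expectation (Xdist n (qs i) a1) (\<lambda>x1.
   measure_pmf.expectation (bernoulli_pmf (rw i x1)) (\<lambda>r. \<Phi> (a0, x0, i, a1, x1, r)))))))"
  unfolding round_pmf_def
  by (simp add: expectation_bind_pmf_finite finite_tr del: integral_bernoulli_pmf)

lemma expectation_round_pmf_le:
  fixes \<Phi> :: "obs \<Rightarrow> real"
  assumes "\<And>a0 x0 i a1. i \<in> set_pmf (tr x0) \<Longrightarrow> a1 \<in> interventions n \<Longrightarrow>
    measure_pmf.expectation (Xdist n (qs i) a1) (\<lambda>x1.
      measure_pmf.expectation (bernoulli_pmf (rw i x1)) (\<lambda>r. \<Phi> (a0, x0, i, a1, x1, r))) \<le> c"
  shows "measure_pmf.expectation (round_pmf n q0 tr qs rw A h) \<Phi> \<le> c"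
proof -
  define \<psi> where "\<psi> a0 x0 i a1 = measure_pmf.expectation (Xdist n (qs i) a1) (\<lambda>x1.
      measure_pmf.expectation (bernoulli_pmf (rw i x1)) (\<lambda>r. \<Phi> (a0, x0, i, a1, x1, r)))" for a0 x0 i a1
  have "measure_pmf.expectation (round_pmf n q0 tr qs rw A h) \<Phi>
      = measure_pmf.expectation (alg_first A h) (\<lambda>a0.
        measure_pmf.expectation (Xdist n q0 a0) (\<lambda>x0.
        measure_pmf.expectation (tr x0) (\<lambda>i.
        measure_pmf.expectation (alg_second A h a0 x0 i) (\<psi> a0 x0 i))))"
    unfolding expectation_round_pmf \<psi>_def ..
  also have "\<dots> \<le> c"
    using assms valid unfolding \<psi>_def[symmetric] valid_algo_def
    by (intro expectation_le_const_finite) (auto simp: finite_tr subset_iff)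
  finally show ?thesis .
qed

lemma expectation_history_Suc:
  fixes G :: "obs list \<Rightarrow> real"
  shows "measure_pmf.expectation (history n q0 tr qs rw A (Suc T)) G =
   measure_pmf.expectation (history n q0 tr qs rw A T)
     (\<lambda>h. measure_pmf.expectation (round_pmf n q0 tr qs rw A h) (\<lambda>ob. G (h @ [ob])))"
  by (simp add: expectation_bind_pmf_finite)

lemma expectation_sum_list_history_le:
  fixes g :: "obs \<Rightarrow> real"
  assumes "\<And>h. measure_pmf.expectation (round_pmf n q0 tr qs rw A h) g \<le> c"
  shows "measure_pmf.expectation (history n q0 tr qs rw A T) (\<lambda>h. sum_list (map g h)) \<le> c * T"
proof (induction T)
  case (Suc T)
  let ?H = "history n q0 tr qs rw A T" and ?R = "round_pmf n q0 tr qs rw A"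
  have "measure_pmf.expectation (history n q0 tr qs rw A (Suc T)) (\<lambda>h. sum_list (map g h))
      = measure_pmf.expectation ?H (\<lambda>h. sum_list (map g h) + measure_pmf.expectation (?R h) g)"
    unfolding expectation_history_Suc
    by (simp add: Bochner_Integration.integral_add integrable_measure_pmf_finite)
  also have "\<dots> = measure_pmf.expectation ?H (\<lambda>h. sum_list (map g h))
      + measure_pmf.expectation ?H (\<lambda>h. measure_pmf.expectation (?R h) g)"
    by (simp add: Bochner_Integration.integral_add integrable_measure_pmf_finite)
  also have "\<dots> \<le> c * T + c"
    by (rule add_mono[OF Suc.IH expectation_le_const_finite]) (use assms in auto)
  finally show ?case by (simp add: algebra_simps)
qed simp

context
  fixes rw rw' :: "nat \<Rightarrow> (nat \<Rightarrow> bool) \<Rightarrow> real" and F :: "nat \<Rightarrow> (nat \<Rightarrow> bool) \<Rightarrow> bool \<Rightarrow> real"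
  assumes bounds: "\<And>i x. 0 \<le> rw i x \<and> rw i x \<le> 1" "\<And>i x. 0 \<le> rw' i x \<and> rw' i x \<le> 1"
    and ratio_True: "\<And>i x. rw' i x = rw i x * exp (F i x True)"
    and ratio_False: "\<And>i x. 1 - rw' i x = (1 - rw i x) * exp (F i x False)"
begin

lemma expectation_round_pmf_change_reward:
  fixes \<Phi> :: "obs \<Rightarrow> real"
  shows "measure_pmf.expectation (round_pmf n q0 tr qs rw' A h) \<Phi>
    = measure_pmf.expectation (round_pmf n q0 tr qs rw A h) (\<lambda>ob. \<Phi> ob * exp (llr_sum F [ob]))"
proof -
  have "measure_pmf.expectation (bernoulli_pmf (rw' i x)) (\<lambda>r. \<Phi> (a0, x0, i, a1, x, r))
      = measure_pmf.expectation (bernoulli_pmf (rw i x)) (\<lambda>r. \<Phi> (a0, x0, i, a1, x, r) * exp (F i x r))"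
    for a0 x0 i a1 x
    using bounds[of i x] ratio_True[of i x] ratio_False[of i x] by simp
  then show ?thesis
    unfolding expectation_round_pmf by (simp add: llr_sum_def del: integral_bernoulli_pmf)
qed

text \<open>The history law under \<open>rw'\<close> has density \<open>exp (llr_sum F)\<close> with respect to the
  history law under \<open>rw\<close>: the algorithm's own randomness cancels in the likelihood ratio.\<close>
lemma expectation_history_change_reward:
  fixes G :: "obs list \<Rightarrow> real"
  shows "measure_pmf.expectation (history n q0 tr qs rw' A T) G
       = measure_pmf.expectation (history n q0 tr qs rw A T) (\<lambda>h. G h * exp (llr_sum F h))"
proof (induction T arbitrary: G)
  case (Suc T)
  have step: "exp (llr_sum F h) * measure_pmf.expectation (round_pmf n q0 tr qs rw' A h) (\<lambda>ob. G (h @ [ob]))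
    = measure_pmf.expectation (round_pmf n q0 tr qs rw A h) (\<lambda>ob. G (h @ [ob]) * exp (llr_sum F (h @ [ob])))"
    for h
  proof -
    have "exp (llr_sum F h) * measure_pmf.expectation (round_pmf n q0 tr qs rw' A h) (\<lambda>ob. G (h @ [ob]))
      = measure_pmf.expectation (round_pmf n q0 tr qs rw A h)
          (\<lambda>ob. exp (llr_sum F h) * (G (h @ [ob]) * exp (llr_sum F [ob])))"
      by (simp add: expectation_round_pmf_change_reward)
    also have "\<dots> = measure_pmf.expectation (round_pmf n q0 tr qs rw A h)
        (\<lambda>ob. G (h @ [ob]) * exp (llr_sum F (h @ [ob])))"
      by (rule Bochner_Integration.integral_cong) (simp_all add: llr_sum_def exp_add)
    finally show ?thesis .
  qed
  have "measure_pmf.expectation (history n q0 tr qs rw' A (Suc T)) G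
    = measure_pmf.expectation (history n q0 tr qs rw A T) (\<lambda>h. exp (llr_sum F h) *
        measure_pmf.expectation (round_pmf n q0 tr qs rw' A h) (\<lambda>ob. G (h @ [ob])))"
    unfolding expectation_history_Suc by (simp add: Suc.IH mult.commute)
  also have "\<dots> = measure_pmf.expectation (history n q0 tr qs rw A (Suc T))
      (\<lambda>h. G h * exp (llr_sum F h))"
    unfolding expectation_history_Suc step ..
  finally show ?case .
qed (simp add: llr_sum_def)

end

end

section \<open>Reduction to a causal bandit at state 1\<close>

definition to_state1 :: "(nat \<Rightarrow> bool) \<Rightarrow> nat pmf" where
  "to_state1 = (\<lambda>_. return_pmf 1)"

lemma finite_set_to_state1 [simp]: "finite (set_pmf (to_state1 x))"
  by (simp add: to_state1_def)

lemma Pmat_to_state1: "Pmat n q0 to_state1 a i = of_bool (i = 1)"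
  by (simp add: Pmat_def to_state1_def pmf_return)

lemma pvalue_to_state1:
  assumes "1 \<le> k"
  shows "pvalue n k q0 to_state1 qs rw \<pi> = exp_reward n qs rw 1 (\<pi> 1)"
proof -
  have "{1..k} \<inter> {i. i = 1} = {1}" using assms by auto
  then show ?thesis by (simp add: pvalue_def Pmat_to_state1)
qed

lemma lambda_par_to_state1_le:
  assumes "1 \<le> k"
  shows "lambda_par n k q0 to_state1 qs \<le> real (mpar n (qs 1))"
proof -
  define uniform where "uniform = (\<lambda>_::interv. 1 / real (card (interventions n)))"
  have nonempty: "interventions n \<noteq> {}" by (auto simp: interventions_def)
  then have card_pos: "0 < card (interventions n)" by (simp add: card_gt_0_iff)
  have uniform_freq: "uniform \<in> freqs n"
    using card_pos nonempty by (simp add: freqs_def uniform_def)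
  have "(\<Sum>i\<in>{1..k}. Pmat n q0 to_state1 a i * sqrt (real (mpar n (qs i)))
          * (\<Sum>b\<in>interventions n. Pmat n q0 to_state1 b i * uniform b) powr (-1/2))
      = sqrt (real (mpar n (qs 1)))" for a
  proof -
    have "{1..k} \<inter> {i. i = 1} = {1}" using assms by auto
    then show ?thesis using card_pos nonempty by (simp add: Pmat_to_state1 uniform_def mult.assoc)
  qed
  then have value_uniform: "(Max ((\<lambda>a. \<bar>\<Sum>i\<in>{1..k}. Pmat n q0 to_state1 a i * sqrt (real (mpar n (qs i)))
          * (\<Sum>b\<in>interventions n. Pmat n q0 to_state1 b i * uniform b) powr (-1/2)\<bar>)
          ` interventions n)) ^ 2 = real (mpar n (qs 1))"
    using nonempty by simp
  show ?thesis
    unfolding lambda_par_def value_uniform[symmetric]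
    by (rule cINF_lower[OF bdd_belowI[of _ 0] uniform_freq]) auto
qed

section \<open>Rare values\<close>

definition rare_value :: "(nat \<Rightarrow> real) \<Rightarrow> nat \<Rightarrow> bool" where
  "rare_value q j = (q j \<le> 1/2)"

definition rare_prob :: "(nat \<Rightarrow> real) \<Rightarrow> nat \<Rightarrow> real" where
  "rare_prob q j = min (q j) (1 - q j)"

lemma rare_prob_le_half: "rare_prob q j \<le> 1/2"
  by (auto simp: rare_prob_def min_def)

lemma map_pmf_Xdist_component:
  assumes "j \<in> {1..n}"
  shows "map_pmf (\<lambda>x. x j) (Xdist n q a) =
    (case a of Obs \<Rightarrow> bernoulli_pmf (q j)
             | Do j' b \<Rightarrow> (if j = j' then return_pmf b else bernoulli_pmf (q j)))"
  unfolding Xdist_def using assms by (subst Pi_pmf_component) auto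

lemma Xdist_Do_component:
  assumes "j \<in> {1..n}" and "x \<in> set_pmf (Xdist n q (Do j b))"
  shows "x j = b"
proof -
  have "x j \<in> set_pmf (map_pmf (\<lambda>x. x j) (Xdist n q (Do j b)))" using assms(2) by simp
  then show ?thesis unfolding map_pmf_Xdist_component[OF assms(1)] by simp
qed

lemma prob_rare_value:
  assumes "j \<in> {1..n}" and "0 \<le> q j" "q j \<le> 1"
  shows "measure_pmf.expectation (Xdist n q a) (\<lambda>x. of_bool (x j = rare_value q j)) =
    (if a = Do j (rare_value q j) then 1 else if a = Do j (\<not> rare_value q j) then 0 else rare_prob q j)"
proof -
  have "measure_pmf.expectation (Xdist n q a) (\<lambda>x. of_bool (x j = rare_value q j))
      = measure_pmf.expectation (map_pmf (\<lambda>x. x j) (Xdist n q a))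
          (\<lambda>b. of_bool (b = rare_value q j) :: real)"
    by simp
  then show ?thesis
    using assms unfolding map_pmf_Xdist_component[OF assms(1)]
    by (auto simp: rare_value_def rare_prob_def split: interv.splits)
qed

lemma prob_rare_value_le:
  assumes "j \<in> {1..n}" and "0 \<le> q j" "q j \<le> 1"
  shows "measure_pmf.expectation (Xdist n q a) (\<lambda>x. of_bool (x j = rare_value q j))
    \<le> rare_prob q j + of_bool (a = Do j (rare_value q j))"
  using prob_rare_value[of j n q a, OF assms] rare_prob_le_half[of q j] assms
  by (auto simp: rare_prob_def)

lemma sum_of_bool_eq_Do_le_1:
  assumes "finite S"
  shows "(\<Sum>j\<in>S. of_bool (a = Do j (b j)) :: real) \<le> 1"
proof (cases "\<exists>j\<in>S. a = Do j (b j)")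
  case True
  then obtain j where "j \<in> S" "a = Do j (b j)" by blast
  then have "(\<Sum>i\<in>S. of_bool (a = Do i (b i)) :: real) = (\<Sum>i\<in>S. of_bool (i = j))"
    by (intro sum.cong) auto
  then show ?thesis using \<open>j \<in> S\<close> assms by simp
qed simp

lemma length_filter_less_ge_sorted_nth:
  fixes xs :: "'a::linorder list"
  assumes "0 < m" "m \<le> length xs" and "sort xs ! (m - 1) < c"
  shows "m \<le> length (filter (\<lambda>x. x < c) xs)"
proof -
  let ?s = "sort xs" and ?P = "\<lambda>x. x < c"
  have "\<forall>x\<in>set (take m ?s). ?P x"
  proof
    fix x assume "x \<in> set (take m ?s)"
    then obtain i where "i < m" "x = ?s ! i"
      using assms(2) by (auto simp: in_set_conv_nth)
    then have "x \<le> ?s ! (m - 1)"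
      using assms(1,2) by (auto intro: sorted_nth_mono)
    then show "?P x" using assms(3) by simp
  qed
  then have "m = length (filter ?P (take m ?s))"
    using assms(2) by simp
  also have "\<dots> \<le> length (filter ?P ?s)"
    by (metis append_take_drop_id filter_append le_add1 length_append)
  also have "\<dots> = length (filter ?P xs)"
    by (metis mset_filter mset_sort size_mset)
  finally show ?thesis .
qed

lemma mpar_bounds:
  assumes "1 \<le> n"
  shows "1 \<le> mpar n q" "mpar n q \<le> n"
    and "mpar n q \<le> card {j\<in>{1..n}. rare_prob q j < 1 / real (mpar n q)}"
proof -
  define xs where "xs = map (rare_prob q) [1..<n+1]"
  define M where "M = {j \<in> {1..n}. sort xs ! (j - 1) < 1 / real j}"
  have mpar_eq: "mpar n q = Max M"
    unfolding mpar_def M_def xs_def rare_prob_def[abs_def] Let_def ..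
  have "length (sort xs) = n" by (simp add: xs_def)
  then have "sort xs ! 0 \<in> set xs"
    using assms by (metis le_numeral_extra(2) less_le_trans nth_mem set_sort zero_less_one)
  then have "sort xs ! 0 \<le> 1/2"
    using rare_prob_le_half[of q] by (auto simp: xs_def)
  then have "1 \<in> M"
    using assms by (simp add: M_def)
  then have "mpar n q \<in> M" unfolding mpar_eq by (intro Max_in) (auto simp: M_def)
  then have m1: "1 \<le> mpar n q" and mn: "mpar n q \<le> n"
    and below: "sort xs ! (mpar n q - 1) < 1 / real (mpar n q)"
    by (auto simp: M_def)
  then show "1 \<le> mpar n q" "mpar n q \<le> n" by auto
  have "mpar n q \<le> length (filter (\<lambda>x. x < 1 / real (mpar n q)) xs)"
    using m1 mn below by (intro length_filter_less_ge_sorted_nth) (auto simp: xs_def)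
  also have "\<dots> = card ({j. rare_prob q j < 1 / real (mpar n q)} \<inter> set [1..<n+1])"
    unfolding xs_def filter_map length_map o_def by (rule distinct_length_filter) simp
  also have "\<dots> = card {j\<in>{1..n}. rare_prob q j < 1 / real (mpar n q)}"
    by (rule arg_cong[where f=card]) auto
  finally show "mpar n q \<le> card {j\<in>{1..n}. rare_prob q j < 1 / real (mpar n q)}" .
qed

text \<open>Take \<open>max 1 (m div 2)\<close> of the at least \<open>m\<close> variables with \<open>rare_prob q j < 1/m\<close>.\<close>
lemma exists_rare_subset:
  assumes "1 \<le> n"
  obtains S where "S \<subseteq> {1..n}" "1 \<le> card S" "mpar n q \<le> 3 * card S"
    "(\<Sum>j\<in>S. rare_prob q j) \<le> 1/2"
proof -
  define m where "m = mpar n q"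
  define J where "J = {j\<in>{1..n}. rare_prob q j < 1 / real m}"
  have m1: "1 \<le> m" and mJ: "m \<le> card J"
    using mpar_bounds[OF assms, of q] by (simp_all add: m_def J_def)
  have "max 1 (m div 2) \<le> card J" using m1 mJ by auto
  then obtain S where S: "S \<subseteq> J" "card S = max 1 (m div 2)"
    by (meson obtain_subset_with_card_n)
  have "(\<Sum>j\<in>S. rare_prob q j) \<le> 1/2"
  proof (cases "m = 1")
    case True
    then obtain j where "S = {j}" using S(2) by (auto simp: card_Suc_eq)
    then show ?thesis using rare_prob_le_half[of q j] by simp
  next
    case False
    then have "card S = m div 2" using S(2) m1 by simp
    have "(\<Sum>j\<in>S. rare_prob q j) \<le> real (card S) * (1 / real m)"
      using S(1) by (intro sum_bounded_above) (auto simp: J_def)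
    also have "\<dots> \<le> 1/2"
      using \<open>card S = m div 2\<close> m1 by (simp add: field_simps)
    finally show ?thesis .
  qed
  moreover have "S \<subseteq> {1..n}" "1 \<le> card S" "mpar n q \<le> 3 * card S"
    using S m1 by (auto simp: J_def m_def)
  ultimately show ?thesis using that by blast
qed

section \<open>The hard instances\<close>

locale hard_instance =
  fixes n :: nat and q :: "nat \<Rightarrow> real" and S :: "nat set" and \<delta> :: real
  assumes delta_pos: "0 < \<delta>" and delta_le: "\<delta> \<le> 1/4"
    and S_subset: "S \<subseteq> {1..n}" and q_prob: "\<And>j. j \<in> {1..n} \<Longrightarrow> 0 \<le> q j \<and> q j \<le> 1"
    and sum_rare_prob_le: "(\<Sum>j\<in>S. rare_prob q j) \<le> 1/2"
begin

definition base_reward :: "nat \<Rightarrow> (nat \<Rightarrow> bool) \<Rightarrow> real" where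
  "base_reward i x = (if \<exists>j\<in>S. x j = rare_value q j then 1/2 - \<delta> else 1/2)"

definition alt_reward :: "nat \<Rightarrow> nat \<Rightarrow> (nat \<Rightarrow> bool) \<Rightarrow> real" where
  "alt_reward j i x = (if x j = rare_value q j then 1/2 + \<delta> else base_reward i x)"

definition log_odds :: real where
  "log_odds = ln ((1/2 + \<delta>) / (1/2 - \<delta>))"

definition llr :: "nat \<Rightarrow> nat \<Rightarrow> (nat \<Rightarrow> bool) \<Rightarrow> bool \<Rightarrow> real" where
  "llr j i x r = (if x j = rare_value q j then if r then log_odds else - log_odds else 0)"

lemma finite_S: "finite S"
  using S_subset finite_subset by blast

lemma Do_rare_in_interventions: "j \<in> S \<Longrightarrow> Do j (rare_value q j) \<in> interventions n"
  using S_subset by (auto simp: interventions_def)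

lemma base_reward_bounds: "0 \<le> base_reward i x \<and> base_reward i x \<le> 1"
  using delta_pos delta_le by (simp add: base_reward_def)

lemma alt_reward_bounds: "0 \<le> alt_reward j i x \<and> alt_reward j i x \<le> 1"
  using delta_pos delta_le base_reward_bounds by (simp add: alt_reward_def)

lemma log_odds_nonneg: "0 \<le> log_odds"
  using delta_pos delta_le by (simp add: log_odds_def field_simps)

lemma log_odds_le: "log_odds \<le> 8 * \<delta>"
proof -
  have "log_odds \<le> (1/2 + \<delta>) / (1/2 - \<delta>) - 1"
    unfolding log_odds_def using delta_pos delta_le by (intro ln_le_minus_one) (simp add: field_simps)
  also have "\<dots> = 2 * \<delta> / (1/2 - \<delta>)" using delta_le by (simp add: field_simps)
  also have "\<dots> \<le> 8 * \<delta>" using delta_pos delta_le by (simp add: field_simps)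
  finally show ?thesis .
qed

lemma alt_reward_ratio_True: "j \<in> S \<Longrightarrow> alt_reward j i x = base_reward i x * exp (llr j i x True)"
  using delta_pos delta_le by (auto simp: alt_reward_def base_reward_def llr_def log_odds_def)

lemma alt_reward_ratio_False:
  "j \<in> S \<Longrightarrow> 1 - alt_reward j i x = (1 - base_reward i x) * exp (llr j i x False)"
  using delta_pos delta_le
  by (auto simp: alt_reward_def base_reward_def llr_def log_odds_def exp_minus field_simps)

lemma expectation_Xdist_Do_rare:
  fixes f :: "(nat \<Rightarrow> bool) \<Rightarrow> real"
  assumes "j \<in> S" and "\<And>x. x j = rare_value q j \<Longrightarrow> f x = c"
  shows "measure_pmf.expectation (Xdist n q (Do j (rare_value q j))) f = c"
proof -
  have j: "j \<in> {1..n}" using assms(1) S_subset by blast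
  have "AE x in measure_pmf (Xdist n q (Do j (rare_value q j))). f x = c"
    using assms(2) Xdist_Do_component[OF j] by (simp add: AE_measure_pmf_iff)
  then have "measure_pmf.expectation (Xdist n q (Do j (rare_value q j))) f
      = measure_pmf.expectation (Xdist n q (Do j (rare_value q j))) (\<lambda>_. c)"
    by (intro integral_cong_AE) auto
  then show ?thesis by simp
qed

lemma prob_rare_value_S:
  assumes "j \<in> S"
  shows "measure_pmf.expectation (Xdist n q a) (\<lambda>x. of_bool (x j = rare_value q j))
     \<le> rare_prob q j + of_bool (a = Do j (rare_value q j))"
proof -
  have j: "j \<in> {1..n}" using assms S_subset by blast
  then show ?thesis using q_prob[OF j] by (intro prob_rare_value_le) auto
qed

lemma base_reward_Do_rare: "j \<in> S \<Longrightarrow>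
    measure_pmf.expectation (Xdist n q (Do j (rare_value q j))) (base_reward i) = 1/2 - \<delta>"
  by (rule expectation_Xdist_Do_rare) (auto simp: base_reward_def)

lemma alt_reward_Do_rare: "j \<in> S \<Longrightarrow>
    measure_pmf.expectation (Xdist n q (Do j (rare_value q j))) (alt_reward j i) = 1/2 + \<delta>"
  by (rule expectation_Xdist_Do_rare) (auto simp: alt_reward_def)

lemma base_reward_Obs: "1/2 - \<delta>/2 \<le> measure_pmf.expectation (Xdist n q Obs) (base_reward i)"
proof -
  have "1/2 - \<delta> * (\<Sum>j\<in>S. of_bool (x j = rare_value q j)) \<le> base_reward i x" for x
  proof (cases "\<exists>j\<in>S. x j = rare_value q j")
    case True
    then have "1 \<le> (\<Sum>j\<in>S. of_bool (x j = rare_value q j) :: real)"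
      using finite_S by (force simp: Suc_le_eq card_gt_0_iff)
    then show ?thesis using True delta_pos by (simp add: base_reward_def)
  qed (simp add: base_reward_def)
  then have lower: "measure_pmf.expectation (Xdist n q Obs)
      (\<lambda>x. 1/2 - \<delta> * (\<Sum>j\<in>S. of_bool (x j = rare_value q j)))
      \<le> measure_pmf.expectation (Xdist n q Obs) (base_reward i)"
    by (intro integral_mono integrable_measure_pmf_finite) auto
  have "(\<Sum>j\<in>S. measure_pmf.expectation (Xdist n q Obs) (\<lambda>x. of_bool (x j = rare_value q j)))
      \<le> (\<Sum>j\<in>S. rare_prob q j)"
    by (intro sum_mono) (use prob_rare_value_S[of _ Obs] in simp)
  then have "\<delta> * (\<Sum>j\<in>S. measure_pmf.expectation (Xdist n q Obs) (\<lambda>x. of_bool (x j = rare_value q j)))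
      \<le> \<delta> * (1/2)"
    using delta_pos sum_rare_prob_le by (intro mult_left_mono) auto
  with lower show ?thesis
    by (simp add: Bochner_Integration.integral_diff Bochner_Integration.integral_sum
        integrable_measure_pmf_finite del: sum_of_bool_eq)
qed

lemma alt_reward_le:
  assumes "j \<in> S" and "a \<noteq> Do j (rare_value q j)"
  shows "measure_pmf.expectation (Xdist n q a) (alt_reward j i) \<le> 1/2 + \<delta>/2"
proof -
  have "measure_pmf.expectation (Xdist n q a) (alt_reward j i)
      \<le> measure_pmf.expectation (Xdist n q a) (\<lambda>x. 1/2 + \<delta> * of_bool (x j = rare_value q j))"
    using delta_pos by (intro integral_mono integrable_measure_pmf_finite)
      (auto simp: alt_reward_def base_reward_def)
  also have "\<dots> = 1/2 + \<delta> * measure_pmf.expectation (Xdist n q a) (\<lambda>x. of_bool (x j = rare_value q j))"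
    by (simp add: Bochner_Integration.integral_add integrable_measure_pmf_finite)
  also have "\<dots> \<le> 1/2 + \<delta> * (1/2)"
    using prob_rare_value_S[OF assms(1), of a] rare_prob_le_half[of q j] assms(2) delta_pos
    by (intro add_left_mono mult_left_mono) auto
  finally show ?thesis by simp
qed

lemma expectation_neg_sum_llr:
  "measure_pmf.expectation (bernoulli_pmf (base_reward i x)) (\<lambda>r. - (\<Sum>j\<in>S. llr j i x r))
    = 2 * \<delta> * log_odds * (\<Sum>j\<in>S. of_bool (x j = rare_value q j))"
proof -
  define N where "N = (\<Sum>j\<in>S. of_bool (x j = rare_value q j) :: real)"
  have sum_llr: "- (\<Sum>j\<in>S. llr j i x r) = (if r then - log_odds else log_odds) * N" for r
    unfolding N_def sum_distrib_left sum_negf[symmetric] by (intro sum.cong) (auto simp: llr_def)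
  show ?thesis
  proof (cases "\<exists>j\<in>S. x j = rare_value q j")
    case True
    then have base: "base_reward i x = 1/2 - \<delta>" by (simp add: base_reward_def)
    show ?thesis
      using delta_pos delta_le unfolding base
      by (simp add: sum_llr N_def[symmetric] algebra_simps del: sum_of_bool_eq)
  next
    case False
    then show ?thesis by (simp add: llr_def)
  qed
qed

text \<open>Only rounds in which some \<open>x j\<close>, \<open>j \<in> S\<close>, takes its rare value carry information,
  and in expectation at most \<open>3/2\<close> of the \<open>x j\<close> do so under any single intervention.\<close>
lemma sum_kl_round_le:
  assumes "a \<in> interventions n"
  shows "measure_pmf.expectation (Xdist n q a) (\<lambda>x.
      measure_pmf.expectation (bernoulli_pmf (base_reward i x)) (\<lambda>r. - (\<Sum>j\<in>S. llr j i x r)))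
    \<le> 3 * \<delta> * log_odds"
proof -
  have "measure_pmf.expectation (Xdist n q a) (\<lambda>x.
      measure_pmf.expectation (bernoulli_pmf (base_reward i x)) (\<lambda>r. - (\<Sum>j\<in>S. llr j i x r)))
    = 2 * \<delta> * log_odds * (\<Sum>j\<in>S. measure_pmf.expectation (Xdist n q a) (\<lambda>x. of_bool (x j = rare_value q j)))"
    unfolding expectation_neg_sum_llr
    by (simp add: Bochner_Integration.integral_sum integrable_measure_pmf_finite del: sum_of_bool_eq)
  also have "\<dots> \<le> 2 * \<delta> * log_odds * (\<Sum>j\<in>S. rare_prob q j + of_bool (a = Do j (rare_value q j)))"
    using delta_pos log_odds_nonneg prob_rare_value_S
    by (intro mult_left_mono sum_mono) auto
  also have "\<dots> \<le> 2 * \<delta> * log_odds * (3/2)"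
    using delta_pos log_odds_nonneg sum_rare_prob_le sum_of_bool_eq_Do_le_1[OF finite_S, of a "rare_value q"]
    by (intro mult_left_mono) (auto simp: sum.distrib simp del: sum_of_bool_eq)
  finally show ?thesis by simp
qed

end

context hard_instance
begin

context
  fixes k :: nat and q0 :: "nat \<Rightarrow> real" and qs :: "nat \<Rightarrow> nat \<Rightarrow> real" and A :: algo
  assumes k_ge_1: "1 \<le> k" and qs_1: "qs 1 = q" and valid: "valid_algo n k A"
begin

lemma finite_set_history_state1 [simp]: "finite (set_pmf (history n q0 to_state1 qs rw A T))"
  by (rule finite_set_history[OF finite_set_to_state1 valid])

definition out_rare_prob :: "nat \<Rightarrow> obs list \<Rightarrow> real" where
  "out_rare_prob j h = measure_pmf.expectation (alg_out A h) (\<lambda>\<pi>. of_bool (\<pi> 1 = Do j (rare_value q j)))"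

lemma out_rare_prob_bounds: "0 \<le> out_rare_prob j h \<and> out_rare_prob j h \<le> 1"
  unfolding out_rare_prob_def by (rule expectation_unit_interval) simp

lemma exp_reward_state1: "exp_reward n qs rw 1 a = measure_pmf.expectation (Xdist n q a) (rw 1)"
  unfolding exp_reward_def qs_1 ..

lemma subopt_base_reward_ge:
  assumes "\<pi> \<in> policies n k"
  shows "\<delta>/2 * (\<Sum>j\<in>S. of_bool (\<pi> 1 = Do j (rare_value q j)))
    \<le> subopt n k q0 to_state1 qs base_reward \<pi>"
proof (cases "\<exists>j\<in>S. \<pi> 1 = Do j (rare_value q j)")
  case True
  then obtain j where j: "j \<in> S" "\<pi> 1 = Do j (rare_value q j)" by blast
  have "\<delta>/2 * (\<Sum>j\<in>S. of_bool (\<pi> 1 = Do j (rare_value q j))) \<le> \<delta>/2"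
    using sum_of_bool_eq_Do_le_1[OF finite_S, of "\<pi> 1" "rare_value q"] delta_pos
    by (simp del: sum_of_bool_eq)
  also have "\<dots> \<le> pvalue n k q0 to_state1 qs base_reward (\<lambda>_. Obs)
      - pvalue n k q0 to_state1 qs base_reward \<pi>"
    using base_reward_Obs[of 1] base_reward_Do_rare[OF j(1), of 1] j(2)
    unfolding pvalue_to_state1[OF k_ge_1] exp_reward_state1 by simp
  also have "\<dots> \<le> subopt n k q0 to_state1 qs base_reward \<pi>"
    using base_reward_bounds by (intro subopt_ge_diff const_in_policies) auto
  finally show ?thesis .
next
  case False
  then show ?thesis
    using subopt_nonneg[OF base_reward_bounds assms] by (simp del: sum_of_bool_eq)
qed

lemma subopt_alt_reward_ge:
  assumes "j \<in> S" and "\<pi> \<in> policies n k"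
  shows "\<delta>/2 * (1 - of_bool (\<pi> 1 = Do j (rare_value q j)))
    \<le> subopt n k q0 to_state1 qs (alt_reward j) \<pi>"
proof (cases "\<pi> 1 = Do j (rare_value q j)")
  case False
  have "\<delta>/2 \<le> pvalue n k q0 to_state1 qs (alt_reward j) (\<lambda>_. Do j (rare_value q j))
      - pvalue n k q0 to_state1 qs (alt_reward j) \<pi>"
    using alt_reward_Do_rare[OF assms(1), of 1] alt_reward_le[OF assms(1) False, of 1]
    unfolding pvalue_to_state1[OF k_ge_1] exp_reward_state1 by simp
  also have "\<dots> \<le> subopt n k q0 to_state1 qs (alt_reward j) \<pi>"
    using alt_reward_bounds Do_rare_in_interventions[OF assms(1)]
    by (intro subopt_ge_diff const_in_policies) auto
  finally show ?thesis using False by simp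
qed (use subopt_nonneg[OF alt_reward_bounds assms(2)] in simp)

lemma regret_base_reward_ge:
  "\<delta>/2 * (\<Sum>j\<in>S. measure_pmf.expectation (history n q0 to_state1 qs base_reward A T) (out_rare_prob j))
    \<le> simple_regret n k q0 to_state1 qs base_reward A T"
proof -
  have "\<delta>/2 * (\<Sum>j\<in>S. of_bool (\<pi> 1 = Do j (rare_value q j))) \<le> 1" for \<pi>
  proof -
    have "\<delta>/2 * (\<Sum>j\<in>S. of_bool (\<pi> 1 = Do j (rare_value q j))) \<le> \<delta>/2 * 1"
      using sum_of_bool_eq_Do_le_1[OF finite_S, of "\<pi> 1" "rare_value q"] delta_pos
      by (intro mult_left_mono) auto
    then show ?thesis using delta_le by linarith
  qed
  then have "measure_pmf.expectation (history n q0 to_state1 qs base_reward A T)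
      (\<lambda>h. measure_pmf.expectation (alg_out A h)
        (\<lambda>\<pi>. \<delta>/2 * (\<Sum>j\<in>S. of_bool (\<pi> 1 = Do j (rare_value q j)))))
    \<le> simple_regret n k q0 to_state1 qs base_reward A T"
    using delta_pos
    by (intro simple_regret_ge[OF base_reward_bounds valid] subopt_base_reward_ge)
       (auto simp: sum_nonneg simp del: sum_of_bool_eq)
  then show ?thesis
    by (simp add: out_rare_prob_def[abs_def] Bochner_Integration.integral_sum integrable_measure_pmf_finite
        measure_pmf.integrable_const_bound[where B=1] del: sum_of_bool_eq)
qed

lemma regret_alt_reward_ge:
  assumes "j \<in> S"
  shows "\<delta>/2 * measure_pmf.expectation (history n q0 to_state1 qs (alt_reward j) A T)
      (\<lambda>h. 1 - out_rare_prob j h)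
    \<le> simple_regret n k q0 to_state1 qs (alt_reward j) A T"
proof -
  have "measure_pmf.expectation (history n q0 to_state1 qs (alt_reward j) A T)
      (\<lambda>h. measure_pmf.expectation (alg_out A h)
        (\<lambda>\<pi>. \<delta>/2 * (1 - of_bool (\<pi> 1 = Do j (rare_value q j)))))
    \<le> simple_regret n k q0 to_state1 qs (alt_reward j) A T"
    using delta_pos delta_le
    by (intro simple_regret_ge[OF alt_reward_bounds valid] subopt_alt_reward_ge[OF assms]) auto
  then show ?thesis
    by (simp add: out_rare_prob_def Bochner_Integration.integral_diff
        measure_pmf.integrable_const_bound[where B=1])
qed

lemma testing_errors_alt_reward:
  assumes "j \<in> S"
  shows "(1 + measure_pmf.expectation (history n q0 to_state1 qs base_reward A T) (llr_sum (llr j))) / 2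
    \<le> measure_pmf.expectation (history n q0 to_state1 qs base_reward A T) (out_rare_prob j)
      + measure_pmf.expectation (history n q0 to_state1 qs (alt_reward j) A T) (\<lambda>h. 1 - out_rare_prob j h)"
proof -
  have change: "measure_pmf.expectation (history n q0 to_state1 qs (alt_reward j) A T) G
    = measure_pmf.expectation (history n q0 to_state1 qs base_reward A T)
        (\<lambda>h. G h * exp (llr_sum (llr j) h))" for G
    by (rule expectation_history_change_reward[OF finite_set_to_state1 valid base_reward_bounds
          alt_reward_bounds alt_reward_ratio_True[OF assms] alt_reward_ratio_False[OF assms]])
  show ?thesis
    using testing_errors_ge[OF finite_set_history_state1 out_rare_prob_bounds] change[of "\<lambda>_. 1"]
    by (simp add: change)
qed

lemma sum_kl_history_le:
  "- (\<Sum>j\<in>S. measure_pmf.expectation (history n q0 to_state1 qs base_reward A T) (llr_sum (llr j)))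
    \<le> 3 * \<delta> * log_odds * T"
proof -
  have "- (\<Sum>j\<in>S. measure_pmf.expectation (history n q0 to_state1 qs base_reward A T) (llr_sum (llr j)))
    = measure_pmf.expectation (history n q0 to_state1 qs base_reward A T)
        (llr_sum (\<lambda>i x r. - (\<Sum>j\<in>S. llr j i x r)))"
  proof -
    have "llr_sum (\<lambda>i x r. - (\<Sum>j\<in>S. llr j i x r)) = (\<lambda>h. - (\<Sum>j\<in>S. llr_sum (llr j) h))"
      by (simp add: fun_eq_iff llr_sum_uminus llr_sum_sum)
    then show ?thesis
      by (simp add: Bochner_Integration.integral_sum integrable_measure_pmf_finite)
  qed
  also have "\<dots> \<le> 3 * \<delta> * log_odds * T"
    unfolding llr_sum_def
  proof (rule expectation_sum_list_history_le[OF finite_set_to_state1 valid]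
      expectation_round_pmf_le[OF finite_set_to_state1 valid])+
    fix a0 x0 i a1
    assume "i \<in> set_pmf (to_state1 x0)" and a1: "a1 \<in> interventions n"
    then have "i = 1" by (simp add: to_state1_def)
    then show "measure_pmf.expectation (Xdist n (qs i) a1) (\<lambda>x1.
        measure_pmf.expectation (bernoulli_pmf (base_reward i x1))
          (\<lambda>r. case (a0, x0, i, a1, x1, r) of (a0, x0, i, a1, x1, r) \<Rightarrow> - (\<Sum>j\<in>S. llr j i x1 r)))
      \<le> 3 * \<delta> * log_odds"
      using sum_kl_round_le[OF a1] qs_1 by simp
  qed
  finally show ?thesis .
qed

lemma regret_sum_ge:
  "\<delta>/4 * (real (card S) - 3 * \<delta> * log_odds * T)
    \<le> simple_regret n k q0 to_state1 qs base_reward A T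
      + (\<Sum>j\<in>S. simple_regret n k q0 to_state1 qs (alt_reward j) A T)"
proof -
  let ?B = "history n q0 to_state1 qs base_reward A T"
    and ?Alt = "\<lambda>j. history n q0 to_state1 qs (alt_reward j) A T"
  have "\<delta>/4 * (real (card S) - 3 * \<delta> * log_odds * T)
      \<le> \<delta>/4 * (real (card S) + (\<Sum>j\<in>S. measure_pmf.expectation ?B (llr_sum (llr j))))"
    using sum_kl_history_le[of T] delta_pos by (intro mult_left_mono) auto
  also have "\<dots> = \<delta>/2 * (\<Sum>j\<in>S. (1 + measure_pmf.expectation ?B (llr_sum (llr j))) / 2)"
    by (simp add: sum.distrib sum_divide_distrib[symmetric])
  also have "\<dots> \<le> \<delta>/2 * (\<Sum>j\<in>S. measure_pmf.expectation ?B (out_rare_prob j)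
      + measure_pmf.expectation (?Alt j) (\<lambda>h. 1 - out_rare_prob j h))"
    using testing_errors_alt_reward delta_pos by (intro mult_left_mono sum_mono) auto
  also have "\<dots> = \<delta>/2 * (\<Sum>j\<in>S. measure_pmf.expectation ?B (out_rare_prob j))
      + (\<Sum>j\<in>S. \<delta>/2 * measure_pmf.expectation (?Alt j) (\<lambda>h. 1 - out_rare_prob j h))"
    by (simp add: sum.distrib sum_distrib_left distrib_left)
  also have "\<dots> \<le> simple_regret n k q0 to_state1 qs base_reward A T
      + (\<Sum>j\<in>S. simple_regret n k q0 to_state1 qs (alt_reward j) A T)"
    using regret_base_reward_ge regret_alt_reward_ge by (intro add_mono sum_mono) auto
  finally show ?thesis .
qed

lemma exists_reward_regret_ge:
  assumes "1 \<le> card S" and delta_sq: "\<delta>^2 = real (card S) / (48 * real T)"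
  shows "\<exists>rw. (\<forall>i x. 0 \<le> rw i x \<and> rw i x \<le> 1) \<and> \<delta>/16 \<le> simple_regret n k q0 to_state1 qs rw A T"
proof -
  have "0 < real T" using delta_sq delta_pos by (cases "T = 0") auto
  have "3 * \<delta> * log_odds * T \<le> 3 * \<delta> * (8 * \<delta>) * T"
    using log_odds_le delta_pos by (intro mult_right_mono mult_left_mono) auto
  also have "\<dots> = card S / 2"
    using delta_sq \<open>0 < real T\<close> by (simp add: power2_eq_square field_simps)
  moreover have "1 \<le> real (card S)" using assms(1) by simp
  ultimately have "real (card S) + 1 \<le> 4 * (real (card S) - 3 * \<delta> * log_odds * T)"
    by (simp add: algebra_simps)
  then have "(real (card S) + 1) * (\<delta>/16)
      \<le> 4 * (real (card S) - 3 * \<delta> * log_odds * T) * (\<delta>/16)"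
    using delta_pos by (intro mult_right_mono) auto
  also have "\<dots> = \<delta>/4 * (real (card S) - 3 * \<delta> * log_odds * T)" by simp
  also have "\<dots> \<le> simple_regret n k q0 to_state1 qs base_reward A T
      + (\<Sum>j\<in>S. simple_regret n k q0 to_state1 qs (alt_reward j) A T)"
    by (rule regret_sum_ge)
  finally consider "\<delta>/16 \<le> simple_regret n k q0 to_state1 qs base_reward A T"
    | j where "j \<in> S" "\<delta>/16 \<le> simple_regret n k q0 to_state1 qs (alt_reward j) A T"
    using exists_ge_of_sum_ge[OF finite_S] by blast
  then show ?thesis using base_reward_bounds alt_reward_bounds by cases blast+
qed

end

end

lemma exists_hard_reward:
  assumes "1 \<le> n" "1 \<le> k" and "\<forall>i\<in>{1..k}. \<forall>j\<in>{1..n}. 0 \<le> qs i j \<and> qs i j \<le> 1"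
    and "n \<le> T" and "valid_algo n k A"
  shows "\<exists>rw. (\<forall>i x. 0 \<le> rw i x \<and> rw i x \<le> 1) \<and>
    simple_regret n k q0 to_state1 qs rw A T \<ge> 1/192 * sqrt (lambda_par n k q0 to_state1 qs / real T)"
proof -
  obtain S where S: "S \<subseteq> {1..n}" "1 \<le> card S" "mpar n (qs 1) \<le> 3 * card S"
    "(\<Sum>j\<in>S. rare_prob (qs 1) j) \<le> 1/2"
    using exists_rare_subset[OF assms(1)] by blast
  have "card S \<le> T" using card_mono[OF _ S(1)] assms(4) by simp
  then have T: "real (card S) \<le> real T" "1 \<le> real T" using S(2) by simp_all
  define \<delta> where "\<delta> = sqrt (real (card S) / (48 * real T))"
  have \<delta>_sq: "\<delta>^2 = real (card S) / (48 * real T)" and "0 < \<delta>"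
    using S(2) T by (simp_all add: \<delta>_def)
  moreover have "\<delta>^2 \<le> (1/4)^2" using T by (simp add: \<delta>_sq field_simps)
  then have "\<delta> \<le> 1/4" by (rule power2_le_imp_le) simp
  ultimately interpret hard_instance n "qs 1" S \<delta>
    using S assms(2,3) by unfold_locales auto
  obtain rw where rw: "\<forall>i x. 0 \<le> rw i x \<and> rw i x \<le> 1" "\<delta>/16 \<le> simple_regret n k q0 to_state1 qs rw A T"
    using exists_reward_regret_ge[where qs=qs, OF assms(2) refl assms(5) S(2) \<delta>_sq] by blast
  have "real (mpar n (qs 1)) \<le> 3 * real (card S)"
    using S(3) by (metis of_nat_le_iff of_nat_mult of_nat_numeral)
  then have "sqrt (lambda_par n k q0 to_state1 qs / T) \<le> sqrt (3 * real (card S) / T)"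
    using lambda_par_to_state1_le[OF assms(2), of n q0 qs]
    by (intro real_sqrt_le_mono divide_right_mono) auto
  also have "\<dots> = 12 * \<delta>"
    using \<delta>_sq \<open>0 < \<delta>\<close> by (intro real_sqrt_unique) (auto simp: power_mult_distrib field_simps)
  finally show ?thesis using rw by (intro exI[of _ rw]) simp
qed

theorem theorem2:
  "\<exists>c::real. c > 0 \<and>
    (\<forall>n k::nat. n \<ge> 1 \<longrightarrow> k \<ge> 1 \<longrightarrow>
      (\<exists>(tr :: (nat \<Rightarrow> bool) \<Rightarrow> nat pmf) (q0 :: nat \<Rightarrow> real).
         (\<forall>x. set_pmf (tr x) \<subseteq> {1..k}) \<and> (\<forall>j\<in>{1..n}. 0 \<le> q0 j \<and> q0 j \<le> 1) \<and>
         (\<forall>qs :: nat \<Rightarrow> nat \<Rightarrow> real.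
            (\<forall>i\<in>{1..k}. \<forall>j\<in>{1..n}. 0 \<le> qs i j \<and> qs i j \<le> 1) \<longrightarrow>
            (\<exists>T0::nat. \<forall>T\<ge>T0. \<forall>A. valid_algo n k A \<longrightarrow>
               (\<exists>rw :: nat \<Rightarrow> (nat \<Rightarrow> bool) \<Rightarrow> real.
                  (\<forall>i x. 0 \<le> rw i x \<and> rw i x \<le> 1) \<and>
                  simple_regret n k q0 tr qs rw A T
                    \<ge> c * sqrt (lambda_par n k q0 tr qs / real T))))))"
proof (intro exI[of _ "1/192"] conjI allI impI, goal_cases)
  case (2 n k)
  then show ?case
    by (intro exI[of _ to_state1] exI[of _ "\<lambda>_. 0"] conjI allI impI ballI exI[of _ n] exists_hard_reward)
      (auto simp: to_state1_def)
qed simp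

end
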